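(* For all integers $n\ge0$ and $m>nt$, $\mathcal{L}^{(t)}_T\big(T^{(t)}_m(x)\,T^{(t)}_n(x)\big)=0$; and for all $n\ge1$, $\mathcal{L}^{(t)}_T\big(T^{(t)}_{nt}(x)\,T^{(t)}_n(x)\big)=t+1$.
   Context: Fix an integer $t\ge1$. For $n\ge1$ let $C_n$ be the $n$-cycle with vertices $1,\dots,n$ (indices mod $n$). If $n\ge t+1$, the $t$-paths in $C_n$ are the $n$ sequences $(i,i+1,\dots,i+t)$ mod $n$, $i=1,\dots,n$; if $n\le t$ there are none. Define $T^{(t)}_n(x)=\sum_F(-1)^{|F|}x^{\,n-(t+1)|F|}$ over all families $F$ of $t$-paths in $C_n$ with pairwise disjoint vertex sets, $T^{(t)}_0=1$. Let $\mathcal{L}^{(t)}_T$ be the linear functional on polynomials with $\mathcal{L}^{(t)}_T(x^{(t+1)j})=\binom{(t+1)j}{j}$ for $j\ge0$ and $\mathcal{L}^{(t)}_T(x^m)=0$ if $t+1\nmid m$. *)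

theory Defs
  imports "HOL-Computational_Algebra.Polynomial"
begin

text \<open>Vertices of C_n are 0,...,n-1 (0-based, indices mod n). The t-path starting
  at vertex i is (i, i+1, ..., i+t) mod n; it exists only when n >= t+1.\<close>

definition tpath_verts :: "nat \<Rightarrow> nat \<Rightarrow> nat \<Rightarrow> nat set" where
  "tpath_verts t n i = (\<lambda>k. (i + k) mod n) ` {0..t}"

text \<open>Families of t-paths (identified by their starting vertices) with pairwise
  disjoint vertex sets.\<close>
definition tpath_families :: "nat \<Rightarrow> nat \<Rightarrow> nat set set" where
  "tpath_families t n = {F. F \<subseteq> {..<n} \<and> (F \<noteq> {} \<longrightarrow> t + 1 \<le> n) \<and>
      (\<forall>i\<in>F. \<forall>j\<in>F. i \<noteq> j \<longrightarrow> tpath_verts t n i \<inter> tpath_verts t n j = {})}"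

definition Tpoly :: "nat \<Rightarrow> nat \<Rightarrow> int poly" where
  "Tpoly t n = (\<Sum>F\<in>tpath_families t n. monom ((-1) ^ card F) (n - (t + 1) * card F))"

definition LT :: "nat \<Rightarrow> int poly \<Rightarrow> int" where
  "LT t p = (\<Sum>i\<le>degree p. coeff p i *
      (if (t + 1) dvd i then int (((t + 1) * (i div (t + 1))) choose (i div (t + 1))) else 0))"

end

theory Submission
  imports Defs
begin

(* Write X for the indeterminate, Q = 1 + X^(t+1), and P_L for the path polynomial: the same
   signed sum over families of disjoint t-paths, taken in the linear path on L vertices.

   1. Combinatorics.  P_L = X P_(L-1) - P_(L-t-1), splitting by whether the last vertex is covered,
      and T_m = X P_(m-1) - (t+1) P_(m-t-1) for m >= t+1: a cycle family either avoids vertex m-1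
      (a path family on m-1 vertices) or contains one of the t+1 paths through it, and by rotation
      each of these t+1 classes contributes -P_(m-t-1).
   2. A transform.  transform t d p = X^(t d) p((1 + X^(t+1)) / X^t) is multiplicative and
      LT p = [X^(t d)] transform t d p for deg p <= d.  Hence LT (T_m T_n) = [X^(t(m+n))] V_m V_n with
      V_m = transform t m T_m, and step 1 yields a three-term recurrence for V_m.
   3. The excess W_m = V_m - X^((t+1)m) is a sliding-window sum of its t predecessors plus a
      boundary term.  By induction every exponent d of W_m satisfies t d + m <= t^2 m, the constant
      term of W_n is 1, and W_(tk) has coefficient t at the extreme exponent (t^2-1)k.
   Expanding (X^((t+1)m) + W_m)(X^((t+1)n) + W_n) at X^(t(m+n)), everything vanishes when m > n t,
   and only 1 + t survives when m = n t. *)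

definition fam_weight :: "nat \<Rightarrow> nat \<Rightarrow> nat set \<Rightarrow> int poly" where
  "fam_weight t n F = monom ((-1) ^ card F) (n - (t + 1) * card F)"

definition lin_families :: "nat \<Rightarrow> nat \<Rightarrow> nat set set" where
  "lin_families t L = {G. (\<forall>g\<in>G. g + t < L) \<and> (\<forall>g\<in>G. \<forall>h\<in>G. g < h \<longrightarrow> g + t < h)}"

definition lin_poly :: "nat \<Rightarrow> nat \<Rightarrow> int poly" where
  "lin_poly t L = (\<Sum>G\<in>lin_families t L. fam_weight t L G)"

lemma lin_families_finite: "finite (lin_families t L)"
proof (rule finite_subset)
  show "lin_families t L \<subseteq> Pow {..<L}" unfolding lin_families_def by auto
qed simp

lemma lin_family_finite: "G \<in> lin_families t L \<Longrightarrow> finite G"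
  unfolding lin_families_def by (rule finite_subset[of _ "{..<L}"]) auto

lemma lin_families_mono: "L \<le> M \<Longrightarrow> lin_families t L \<subseteq> lin_families t M"
  unfolding lin_families_def by auto

lemma lin_families_short: "L \<le> t \<Longrightarrow> lin_families t L = {{}}"
  unfolding lin_families_def by auto

lemma lin_families_split:
  assumes "t + 1 \<le> L"
  shows "lin_families t L = lin_families t (L - 1) \<union> insert (L - t - 1) ` lin_families t (L - t - 1)"
proof (intro equalityI subsetI)
  fix G assume G: "G \<in> lin_families t L"
  let ?a = "L - t - 1"
  have bound: "\<And>g. g \<in> G \<Longrightarrow> g + t < L"
    and sep: "\<And>g h. g \<in> G \<Longrightarrow> h \<in> G \<Longrightarrow> g < h \<Longrightarrow> g + t < h"
    using G unfolding lin_families_def by auto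
  show "G \<in> lin_families t (L - 1) \<union> insert ?a ` lin_families t ?a"
  proof (cases "?a \<in> G")
    case False
    then have "g + t < L - 1" if "g \<in> G" for g
      using bound[OF that] that by (cases "g = ?a") (auto simp: less_diff_conv)
    then show ?thesis using sep unfolding lin_families_def by blast
  next
    case True
    have "g + t < ?a" if "g \<in> G - {?a}" for g
      using sep[of g ?a] sep[of ?a g] bound[of g] that True assms by (cases "g < ?a") auto
    then have "G - {?a} \<in> lin_families t ?a" using sep unfolding lin_families_def by blast
    moreover have "G = insert ?a (G - {?a})" using True by auto
    ultimately show ?thesis by blast
  qed
next
  fix G assume "G \<in> lin_families t (L - 1) \<union> insert (L - t - 1) ` lin_families t (L - t - 1)"
  then show "G \<in> lin_families t L" using assms unfolding lin_families_def by auto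
qed

(* k disjoint t-paths need (t+1)k vertices, so the weights never truncate exponents. *)
lemma lin_families_card: "G \<in> lin_families t L \<Longrightarrow> (t + 1) * card G \<le> L"
proof (induction L arbitrary: G rule: less_induct)
  case (less L)
  show ?case
  proof (cases "t + 1 \<le> L")
    case False
    then show ?thesis using less.prems lin_families_short[of L t] by simp
  next
    case True
    then consider "G \<in> lin_families t (L - 1)"
      | G' where "G' \<in> lin_families t (L - t - 1)" "G = insert (L - t - 1) G'"
      using less.prems lin_families_split by blast
    then show ?thesis
    proof cases
      case 1
      then show ?thesis using less.IH[of "L - 1"] True by fastforce
    next
      case 2
      have "L - t - 1 \<notin> G'" using 2(1) unfolding lin_families_def by auto
      then have "card G = Suc (card G')" using 2 lin_family_finite by simp
      then show ?thesis using less.IH[of "L - t - 1" G'] 2(1) True by simp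
    qed
  qed
qed

lemma lin_poly_short: "L \<le> t \<Longrightarrow> lin_poly t L = monom 1 L"
  unfolding lin_poly_def fam_weight_def by (simp add: lin_families_short)

lemma lin_poly_degree: "degree (lin_poly t L) \<le> L"
  unfolding lin_poly_def fam_weight_def
  by (rule degree_sum_le[OF lin_families_finite]) (rule order.trans[OF degree_monom_le], simp)

lemma weight_sum_shift:
  assumes "t + 1 \<le> L"
  shows "(\<Sum>G\<in>lin_families t (L - 1). fam_weight t L G) = monom 1 1 * lin_poly t (L - 1)"
  unfolding lin_poly_def sum_distrib_left
proof (rule sum.cong[OF refl])
  fix G assume "G \<in> lin_families t (L - 1)"
  then have "L - (t + 1) * card G = 1 + (L - 1 - (t + 1) * card G)"
    using lin_families_card assms by fastforce
  then show "fam_weight t L G = monom 1 1 * fam_weight t (L - 1) G"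
    unfolding fam_weight_def by (simp add: mult_monom)
qed

lemma weight_sum_insert:
  "(\<Sum>G\<in>insert (L - t - 1) ` lin_families t (L - t - 1). fam_weight t L G) = - lin_poly t (L - t - 1)"
proof -
  let ?a = "L - t - 1"
  have notin: "?a \<notin> G" if "G \<in> lin_families t ?a" for G
    using that unfolding lin_families_def by auto
  have "inj_on (insert ?a) (lin_families t ?a)"
    by (rule inj_onI) (metis notin insert_ident)
  moreover have "fam_weight t L (insert ?a G) = - fam_weight t ?a G" if "G \<in> lin_families t ?a" for G
  proof -
    have "card (insert ?a G) = Suc (card G)"
      using notin[OF that] lin_family_finite[OF that] by simp
    moreover have "L - (t + 1) * Suc (card G) = ?a - (t + 1) * card G" by simp
    ultimately show ?thesis unfolding fam_weight_def by (simp add: minus_monom)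
  qed
  ultimately show ?thesis
    unfolding lin_poly_def by (simp add: sum.reindex sum_negf[symmetric])
qed

lemma lin_poly_rec:
  assumes "1 \<le> L"
  shows "lin_poly t L = monom 1 1 * lin_poly t (L - 1) - (if t + 1 \<le> L then lin_poly t (L - t - 1) else 0)"
proof (cases "t + 1 \<le> L")
  case True
  have "lin_families t (L - 1) \<inter> insert (L - t - 1) ` lin_families t (L - t - 1) = {}"
    unfolding lin_families_def by auto
  then have "lin_poly t L = (\<Sum>G\<in>lin_families t (L - 1). fam_weight t L G)
      + (\<Sum>G\<in>insert (L - t - 1) ` lin_families t (L - t - 1). fam_weight t L G)"
    unfolding lin_poly_def lin_families_split[OF True]
    by (simp add: lin_families_finite sum.union_disjoint)
  then show ?thesis using weight_sum_shift[OF True] weight_sum_insert[where L = L and t = t] True by simp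
next
  case False
  then have "monom (1::int) L = monom 1 1 * monom 1 (L - 1)" using assms by (simp add: mult_monom)
  then show ?thesis using False by (simp add: lin_poly_short)
qed

lemma tpath_verts_interval:
  assumes "s + t < m"
  shows "tpath_verts t m s = {s..s + t}"
proof -
  have "tpath_verts t m s = (+) s ` {0..t}"
    unfolding tpath_verts_def using assms by (intro image_cong) auto
  also have "\<dots> = {s..s + t}" by (simp add: image_add_atLeastAtMost)
  finally show ?thesis .
qed

lemma last_vertex_covered:
  assumes "s < m"
  shows "m - 1 \<in> tpath_verts t m s \<longleftrightarrow> m \<le> s + t + 1"
proof
  assume "m - 1 \<in> tpath_verts t m s"
  then show "m \<le> s + t + 1" using tpath_verts_interval[of s t m] by (cases "s + t < m") auto
next
  assume "m \<le> s + t + 1"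
  then have "m - 1 - s \<in> {0..t}" "(s + (m - 1 - s)) mod m = m - 1" using assms by auto
  then show "m - 1 \<in> tpath_verts t m s" unfolding tpath_verts_def by (metis image_eqI)
qed

lemma tpath_family_subset:
  "F \<in> tpath_families t m \<Longrightarrow> F' \<subseteq> F \<Longrightarrow> F' \<in> tpath_families t m"
  unfolding tpath_families_def by blast

lemma lin_families_in_cycle: "lin_families t m \<subseteq> tpath_families t m"
proof
  fix G assume G: "G \<in> lin_families t m"
  have bound: "\<And>g. g \<in> G \<Longrightarrow> g + t < m"
    and sep: "\<And>g h. g \<in> G \<Longrightarrow> h \<in> G \<Longrightarrow> g < h \<Longrightarrow> g + t < h"
    using G unfolding lin_families_def by auto
  have "tpath_verts t m i \<inter> tpath_verts t m j = {}" if "i \<in> G" "j \<in> G" "i \<noteq> j" for i j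
    using that sep[of i j] sep[of j i] by (simp add: bound tpath_verts_interval) (cases "i < j"; auto)
  moreover have "G \<noteq> {} \<Longrightarrow> t + 1 \<le> m" using bound by fastforce
  ultimately show "G \<in> tpath_families t m"
    unfolding tpath_families_def using bound by fastforce
qed

lemma cycle_family_in_lin:
  assumes F: "F \<in> tpath_families t m" and bound: "\<And>g. g \<in> F \<Longrightarrow> g + t < B" and "B \<le> m"
  shows "F \<in> lin_families t B"
proof -
  have disj: "\<And>i j. i \<in> F \<Longrightarrow> j \<in> F \<Longrightarrow> i \<noteq> j \<Longrightarrow>
      tpath_verts t m i \<inter> tpath_verts t m j = {}"
    using F unfolding tpath_families_def by blast
  have "g + t < h" if "g \<in> F" "h \<in> F" "g < h" for g h
    using disj[of g h] that bound[of g] bound[of h] \<open>B \<le> m\<close>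
    by (simp add: tpath_verts_interval)
  then show ?thesis unfolding lin_families_def using bound by blast
qed

definition families_through :: "nat \<Rightarrow> nat \<Rightarrow> nat \<Rightarrow> nat set set" where
  "families_through t m s = {F \<in> tpath_families t m. s \<in> F}"

lemma families_through_last:
  assumes "t + 1 \<le> m"
  shows "families_through t m (m - t - 1) = insert (m - t - 1) ` lin_families t (m - t - 1)"
proof (intro equalityI subsetI)
  let ?a = "m - t - 1"
  fix F assume F: "F \<in> families_through t m ?a"
  have fam: "F \<in> tpath_families t m" and "?a \<in> F" using F unfolding families_through_def by auto
  have last: "tpath_verts t m ?a = {?a..m - 1}" using assms tpath_verts_interval[of ?a t m] by simp
  have "g + t < ?a" if g: "g \<in> F - {?a}" for g
  proof -
    have "g < m" using fam g unfolding tpath_families_def by auto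
    have disj: "tpath_verts t m g \<inter> {?a..m - 1} = {}"
      using fam g \<open>?a \<in> F\<close> unfolding last[symmetric] tpath_families_def by blast
    then have "\<not> m \<le> g + t + 1" using last_vertex_covered[OF \<open>g < m\<close>, of t] assms by auto
    then show ?thesis using disj by (simp add: tpath_verts_interval)
  qed
  then have "F - {?a} \<in> lin_families t ?a"
    using cycle_family_in_lin[OF tpath_family_subset[OF fam Diff_subset], of "{?a}" ?a] by simp
  moreover have "F = insert ?a (F - {?a})" using \<open>?a \<in> F\<close> by auto
  ultimately show "F \<in> insert ?a ` lin_families t ?a" by blast
next
  fix F assume "F \<in> insert (m - t - 1) ` lin_families t (m - t - 1)"
  then show "F \<in> families_through t m (m - t - 1)"
    using lin_families_split[OF assms] lin_families_in_cycle unfolding families_through_def by blast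
qed

lemma cycle_families_decomp:
  assumes "t + 1 \<le> m"
  shows "tpath_families t m = lin_families t (m - 1) \<union> (\<Union>s\<in>{m - t - 1..<m}. families_through t m s)"
proof (intro equalityI subsetI)
  fix F assume F: "F \<in> tpath_families t m"
  then have "F \<subseteq> {..<m}" unfolding tpath_families_def by auto
  show "F \<in> lin_families t (m - 1) \<union> (\<Union>s\<in>{m - t - 1..<m}. families_through t m s)"
  proof (cases "\<exists>s\<in>F. m - 1 \<in> tpath_verts t m s")
    case True
    then obtain s where "s \<in> F" "s < m" "m \<le> s + t + 1"
      using last_vertex_covered \<open>F \<subseteq> {..<m}\<close> by blast
    then show ?thesis using F unfolding families_through_def by auto
  next
    case False
    then have "g + t < m - 1" if "g \<in> F" for g
      using that last_vertex_covered[of g m t] \<open>F \<subseteq> {..<m}\<close> by fastforce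
    then show ?thesis using cycle_family_in_lin[OF F] by auto
  qed
next
  fix F assume "F \<in> lin_families t (m - 1) \<union> (\<Union>s\<in>{m - t - 1..<m}. families_through t m s)"
  then show "F \<in> tpath_families t m"
    using lin_families_mono[of "m - 1" m t] lin_families_in_cycle unfolding families_through_def by auto
qed

lemma families_through_disjoint:
  assumes "t + 1 \<le> m" "i \<in> {m - t - 1..<m}" "j \<in> {m - t - 1..<m}" "i \<noteq> j"
  shows "families_through t m i \<inter> families_through t m j = {}"
proof -
  have "m - 1 \<in> tpath_verts t m i" "m - 1 \<in> tpath_verts t m j"
    using assms last_vertex_covered by auto
  then show ?thesis using assms(4) unfolding families_through_def tpath_families_def by blast
qed

definition cyc_rotate :: "nat \<Rightarrow> nat \<Rightarrow> nat \<Rightarrow> nat" where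
  "cyc_rotate m r v = (v + r) mod m"

lemma cyc_rotate_inverse:
  assumes "r \<le> m" "v < m"
  shows "cyc_rotate m (m - r) (cyc_rotate m r v) = v"
proof -
  have "cyc_rotate m (m - r) (cyc_rotate m r v) = (v + r + (m - r)) mod m"
    unfolding cyc_rotate_def by (simp add: mod_simps)
  also have "\<dots> = v" using assms by simp
  finally show ?thesis .
qed

lemma cyc_rotate_inj: "r \<le> m \<Longrightarrow> inj_on (cyc_rotate m r) {..<m}"
  by (rule inj_on_inverseI[where g = "cyc_rotate m (m - r)"]) (simp add: cyc_rotate_inverse)

lemma tpath_verts_rotate: "tpath_verts t m (cyc_rotate m r s) = cyc_rotate m r ` tpath_verts t m s"
  unfolding tpath_verts_def cyc_rotate_def image_image
  by (intro image_cong refl) (simp add: mod_simps ac_simps)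

lemma tpath_families_rotate:
  assumes "r \<le> m" and F: "F \<in> tpath_families t m"
  shows "cyc_rotate m r ` F \<in> tpath_families t m"
proof (cases "F = {}")
  case True
  then show ?thesis using F by simp
next
  case False
  then have "0 < m" using F unfolding tpath_families_def by auto
  have verts: "tpath_verts t m s \<subseteq> {..<m}" for s
    unfolding tpath_verts_def using \<open>0 < m\<close> by auto
  have "tpath_verts t m i \<inter> tpath_verts t m j = {}" if "i \<in> F" "j \<in> F" "i \<noteq> j" for i j
    using F that unfolding tpath_families_def by blast
  then have "tpath_verts t m (cyc_rotate m r i) \<inter> tpath_verts t m (cyc_rotate m r j) = {}"
    if "i \<in> F" "j \<in> F" "cyc_rotate m r i \<noteq> cyc_rotate m r j" for i j
    using that unfolding tpath_verts_rotate
      inj_on_image_Int[OF cyc_rotate_inj[OF \<open>r \<le> m\<close>] verts verts, symmetric] by auto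
  moreover have "cyc_rotate m r ` F \<subseteq> {..<m}" unfolding cyc_rotate_def using \<open>0 < m\<close> by auto
  ultimately show ?thesis using F unfolding tpath_families_def by auto
qed

lemma families_through_rotate:
  "k \<le> m \<Longrightarrow> F \<in> families_through t m a \<Longrightarrow>
    cyc_rotate m k ` F \<in> families_through t m (cyc_rotate m k a)"
  unfolding families_through_def using tpath_families_rotate by blast

(* By rotational symmetry, all classes families_through t m s have the same weight sum. *)
lemma families_through_weight_rotate:
  assumes "s < m" "s' < m"
  shows "(\<Sum>F\<in>families_through t m s. fam_weight t m F) = (\<Sum>F\<in>families_through t m s'. fam_weight t m F)"
proof -
  define r where "r = (s' + m - s) mod m"
  have "r \<le> m" unfolding r_def using assms by (simp add: mod_le_divisor)
  have "cyc_rotate m r s = (s' + m) mod m" unfolding r_def cyc_rotate_def using assms by (simp add: mod_simps)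
  then have to_s': "cyc_rotate m r s = s'" using assms by simp
  then have to_s: "cyc_rotate m (m - r) s' = s" using cyc_rotate_inverse[OF \<open>r \<le> m\<close> \<open>s < m\<close>] by simp
  have undo: "cyc_rotate m (m - k) ` cyc_rotate m k ` F = F" if "k \<le> m" "F \<in> families_through t m a" for k a F
  proof -
    have "F \<subseteq> {..<m}" using that(2) unfolding families_through_def tpath_families_def by auto
    then show ?thesis unfolding image_image using cyc_rotate_inverse[OF that(1)] by (simp add: subset_iff)
  qed
  show ?thesis
  proof (rule sum.reindex_bij_witness[where j = "image (cyc_rotate m r)" and i = "image (cyc_rotate m (m - r))"])
    fix F assume F: "F \<in> families_through t m s'"
    show "cyc_rotate m (m - r) ` F \<in> families_through t m s"
      using families_through_rotate[OF _ F, of "m - r"] to_s by simp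
    show "cyc_rotate m r ` cyc_rotate m (m - r) ` F = F"
      using undo[of "m - r" F s'] F \<open>r \<le> m\<close> by simp
  next
    fix F assume F: "F \<in> families_through t m s"
    show "cyc_rotate m r ` F \<in> families_through t m s'"
      using families_through_rotate[OF \<open>r \<le> m\<close> F] to_s' by simp
    show "cyc_rotate m (m - r) ` cyc_rotate m r ` F = F"
      using undo[OF \<open>r \<le> m\<close> F] .
    have "F \<subseteq> {..<m}" using F unfolding families_through_def tpath_families_def by auto
    then have "inj_on (cyc_rotate m r) F" using cyc_rotate_inj[OF \<open>r \<le> m\<close>] inj_on_subset by blast
    then show "fam_weight t m (cyc_rotate m r ` F) = fam_weight t m F"
      unfolding fam_weight_def by (simp add: card_image)
  qed
qed

lemma Tpoly_weight: "Tpoly t m = (\<Sum>F\<in>tpath_families t m. fam_weight t m F)"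
  unfolding Tpoly_def fam_weight_def ..

lemma tpath_families_short: "m \<le> t \<Longrightarrow> tpath_families t m = {{}}"
  unfolding tpath_families_def by auto

lemma Tpoly_short: "m \<le> t \<Longrightarrow> Tpoly t m = monom 1 m"
  unfolding Tpoly_def by (simp add: tpath_families_short)

lemma Tpoly_degree: "degree (Tpoly t m) \<le> m"
  unfolding Tpoly_def
  by (rule degree_sum_le) (auto simp: tpath_families_def intro: finite_subset[of _ "Pow {..<m}"]
        order.trans[OF degree_monom_le])

lemma Tpoly_via_lin_poly:
  assumes "1 \<le> m"
  shows "Tpoly t m = monom 1 1 * lin_poly t (m - 1)
    - (if t + 1 \<le> m then of_nat (t + 1) * lin_poly t (m - t - 1) else 0)"
proof (cases "t + 1 \<le> m")
  case False
  then show ?thesis using assms by (simp add: Tpoly_short lin_poly_short mult_monom)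
next
  case True
  let ?S = "{m - t - 1..<m}" and ?w = "fam_weight t m"
  have fin: "finite (families_through t m s)" for s
    unfolding families_through_def tpath_families_def
    by (rule finite_subset[of _ "Pow {..<m}"]) auto
  have "lin_families t (m - 1) \<inter> (\<Union>s\<in>?S. families_through t m s) = {}"
    unfolding lin_families_def families_through_def by fastforce
  then have "Tpoly t m = sum ?w (lin_families t (m - 1)) + sum ?w (\<Union>s\<in>?S. families_through t m s)"
    unfolding Tpoly_weight cycle_families_decomp[OF True]
    by (intro sum.union_disjoint) (auto simp: lin_families_finite fin)
  also have "sum ?w (\<Union>s\<in>?S. families_through t m s) = (\<Sum>s\<in>?S. sum ?w (families_through t m s))"
    by (rule sum.UNION_disjoint) (use families_through_disjoint[OF True] fin in auto)
  also have "\<dots> = (\<Sum>s\<in>?S. sum ?w (families_through t m (m - t - 1)))"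
    using True by (intro sum.cong refl families_through_weight_rotate) auto
  also have "\<dots> = of_nat (t + 1) * - lin_poly t (m - t - 1)"
    unfolding families_through_last[OF True] weight_sum_insert using True by simp
  finally show ?thesis using weight_sum_shift[OF True] True by simp
qed

abbreviation Qpoly :: "nat \<Rightarrow> int poly" where
  "Qpoly t \<equiv> monom 1 (t + 1) + 1"

(* For deg p <= d, transform t d p = X^(t d) p((1 + X^(t+1)) / X^t), written without division.
   It is linear and multiplicative, and it turns the functional LT into a single coefficient. *)
definition transform :: "nat \<Rightarrow> nat \<Rightarrow> int poly \<Rightarrow> int poly" where
  "transform t d p = (\<Sum>i\<le>d. smult (coeff p i) (Qpoly t ^ i * monom 1 (t * (d - i))))"

lemma transform_add: "transform t d (p + q) = transform t d p + transform t d q"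
  unfolding transform_def by (simp add: smult_add_left sum.distrib)

lemma transform_diff: "transform t d (p - q) = transform t d p - transform t d q"
  unfolding transform_def by (simp add: smult_diff_left sum_subtractf)

lemma transform_smult: "transform t d (smult c p) = smult c (transform t d p)"
proof -
  have "smult c (transform t d p) = [:c:] * transform t d p" by simp
  then show ?thesis unfolding transform_def sum_distrib_left by (simp add: smult_smult mult.commute)
qed

lemma transform_of_nat_mult: "transform t d (of_nat c * p) = of_nat c * transform t d p"
  by (simp add: of_nat_poly transform_smult)

lemma transform_zero: "transform t d 0 = 0"
  unfolding transform_def by simp

lemma transform_pCons:
  "transform t (Suc d) (pCons a p) = smult a (monom 1 (t * Suc d)) + Qpoly t * transform t d p"
  unfolding transform_def sum.atMost_Suc_shift by (simp add: sum_distrib_left mult_ac)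

lemma transform_X_mult: "transform t (Suc d) (monom 1 1 * p) = Qpoly t * transform t d p"
  using transform_pCons[of t d 0 p] by (simp add: monom_Suc monom_0)

lemma transform_monom: "transform t d (monom 1 d) = Qpoly t ^ d"
proof -
  have terms: "(\<lambda>i. smult (coeff (monom 1 d) i) (Qpoly t ^ i * monom 1 (t * (d - i))))
      = (\<lambda>i. if i = d then Qpoly t ^ d else 0)"
    by (auto simp: fun_eq_iff)
  show ?thesis unfolding transform_def terms by simp
qed

lemma transform_raise:
  assumes "degree p \<le> d"
  shows "transform t (d + a) p = monom 1 (t * a) * transform t d p"
proof -
  have "transform t (d + a) p = (\<Sum>i\<le>d. smult (coeff p i) (Qpoly t ^ i * monom 1 (t * (d + a - i))))"
    unfolding transform_def
    by (rule sum.mono_neutral_right) (use assms in \<open>auto simp: coeff_eq_0\<close>)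
  also have "\<dots> = monom 1 (t * a) * transform t d p"
    unfolding transform_def sum_distrib_left
  proof (rule sum.cong[OF refl])
    fix i assume "i \<in> {..d}"
    then have "t * (d + a - i) = t * a + t * (d - i)" by (simp add: algebra_simps diff_mult_distrib2)
    then have split: "monom (1::int) (t * (d + a - i)) = monom 1 (t * a) * monom 1 (t * (d - i))"
      by (simp add: mult_monom)
    show "smult (coeff p i) (Qpoly t ^ i * monom 1 (t * (d + a - i))) =
      monom 1 (t * a) * smult (coeff p i) (Qpoly t ^ i * monom 1 (t * (d - i)))"
      unfolding split by (simp add: mult_ac)
  qed
  finally show ?thesis .
qed

lemma transform_mult:
  "degree p \<le> d1 \<Longrightarrow> degree q \<le> d2 \<Longrightarrow>
    transform t (d1 + d2) (p * q) = transform t d1 p * transform t d2 q"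
proof (induction d1 arbitrary: p)
  case 0
  then have p: "p = [:coeff p 0:]" by (metis degree_0_id le_zero_eq)
  have "p * q = smult (coeff p 0) q" by (subst p) simp
  moreover have "transform t 0 p = [:coeff p 0:]" unfolding transform_def by (simp add: monom_0)
  ultimately show ?case by (simp add: transform_smult)
next
  case (Suc d p)
  obtain a p' where p: "p = pCons a p'" by (cases p) auto
  have "degree p' \<le> d" using Suc.prems(1) p by (cases "p' = 0") auto
  have "p * q = smult a q + pCons 0 (p' * q)" using p by simp
  then have "transform t (Suc d + d2) (p * q)
      = smult a (transform t (d2 + Suc d) q) + transform t (Suc (d + d2)) (pCons 0 (p' * q))"
    by (simp add: transform_add transform_smult add.commute)
  also have "transform t (d2 + Suc d) q = monom 1 (t * Suc d) * transform t d2 q"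
    by (rule transform_raise[OF Suc.prems(2)])
  also have "transform t (Suc (d + d2)) (pCons 0 (p' * q)) = Qpoly t * (transform t d p' * transform t d2 q)"
    using Suc.IH[OF \<open>degree p' \<le> d\<close> Suc.prems(2)] by (simp add: transform_pCons)
  finally show ?case unfolding p transform_pCons
    by (simp add: algebra_simps smult_monom flip: mult_smult_right)
qed

(* [X^(t i)] Q^i = binom(i, i/(t+1)) if (t+1) divides i, and 0 otherwise: exactly LT (x^i). *)
lemma Qpoly_power_coeff:
  "coeff (Qpoly t ^ i) (t * i) =
     (if (t + 1) dvd i then int (((t + 1) * (i div (t + 1))) choose (i div (t + 1))) else 0)"
proof -
  have "Qpoly t ^ i = (\<Sum>j\<le>i. monom (of_nat (i choose j)) ((t + 1) * j))"
    unfolding binomial_ring by (simp add: monom_power of_nat_monom mult_monom mult.commute)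
  then have "coeff (Qpoly t ^ i) (t * i) = (\<Sum>j\<le>i. if (t + 1) * j = t * i then of_nat (i choose j) else 0)"
    by (simp add: coeff_sum)
  also have "\<dots> = (if (t + 1) dvd i then int (((t + 1) * (i div (t + 1))) choose (i div (t + 1))) else 0)"
  proof (cases "(t + 1) dvd i")
    case True
    then obtain q where i: "i = (t + 1) * q" by blast
    have "(t + 1) * j = t * i \<longleftrightarrow> j = t * q" for j
      unfolding i by (metis mult.left_commute mult_left_cancel add_is_0 one_neq_zero)
    then have "(\<Sum>j\<le>i. if (t + 1) * j = t * i then (of_nat (i choose j)::int) else 0) = of_nat (i choose (t * q))"
      using i by (simp add: sum.delta)
    also have "i choose (t * q) = i choose q"
      using binomial_symmetric[of "t * q" i] i by simp
    finally have "(\<Sum>j\<le>i. if (t + 1) * j = t * i then (of_nat (i choose j)::int) else 0) = int (i choose q)" .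
    moreover have "i div (t + 1) = q" "(t + 1) * q = i"
      unfolding i by (rule nonzero_mult_div_cancel_left, simp) simp
    ultimately show ?thesis using True by (simp only: if_True)
  next
    case False
    then have "(t + 1) * j \<noteq> t * i" for j
      by (metis coprime_dvd_mult_right_iff coprime_Suc_left_nat dvd_triv_left Suc_eq_plus1)
    then show ?thesis using False by simp
  qed
  finally show ?thesis .
qed

lemma LT_via_transform:
  assumes "degree p \<le> d"
  shows "LT t p = coeff (transform t d p) (t * d)"
proof -
  have "LT t p = (\<Sum>i\<le>d. coeff p i * coeff (Qpoly t ^ i) (t * i))"
    unfolding LT_def Qpoly_power_coeff
    by (rule sum.mono_neutral_left) (use assms in \<open>auto simp: coeff_eq_0\<close>)
  also have "\<dots> = coeff (transform t d p) (t * d)"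
    unfolding transform_def coeff_sum
  proof (rule sum.cong[OF refl])
    fix i assume "i \<in> {..d}"
    then have "t * d = t * (d - i) + t * i" by (simp add: diff_mult_distrib2)
    then show "coeff p i * coeff (Qpoly t ^ i) (t * i)
        = coeff (smult (coeff p i) (Qpoly t ^ i * monom 1 (t * (d - i)))) (t * d)"
      by (subst mult.commute) (simp add: coeff_monom_mult)
  qed
  finally show ?thesis .
qed

definition lin_transform :: "nat \<Rightarrow> nat \<Rightarrow> int poly" where
  "lin_transform t L = transform t L (lin_poly t L)"

definition cyc_transform :: "nat \<Rightarrow> nat \<Rightarrow> int poly" where
  "cyc_transform t m = transform t m (Tpoly t m)"

lemma lin_transform_short: "L \<le> t \<Longrightarrow> lin_transform t L = Qpoly t ^ L"
  unfolding lin_transform_def by (simp add: lin_poly_short transform_monom)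

lemma cyc_transform_short: "m \<le> t \<Longrightarrow> cyc_transform t m = Qpoly t ^ m"
  unfolding cyc_transform_def by (simp add: Tpoly_short transform_monom)

lemma transform_lower:
  assumes "t + 1 \<le> m" "degree p \<le> m - t - 1"
  shows "transform t m p = monom 1 ((t + 1) * t) * transform t (m - t - 1) p"
  using transform_raise[OF assms(2), of t "t + 1"] assms(1) by (simp add: mult.commute)

lemma transform_lin_terms:
  shows "1 \<le> L \<Longrightarrow> transform t L (monom 1 1 * lin_poly t (L - 1)) = Qpoly t * lin_transform t (L - 1)"
    and "t + 1 \<le> L \<Longrightarrow>
      transform t L (lin_poly t (L - t - 1)) = monom 1 ((t + 1) * t) * lin_transform t (L - t - 1)"
proof -
  assume "1 \<le> L"
  then show "transform t L (monom 1 1 * lin_poly t (L - 1)) = Qpoly t * lin_transform t (L - 1)"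
    using transform_X_mult[of t "L - 1"] unfolding lin_transform_def by simp
next
  assume "t + 1 \<le> L"
  then show "transform t L (lin_poly t (L - t - 1)) = monom 1 ((t + 1) * t) * lin_transform t (L - t - 1)"
    unfolding lin_transform_def by (rule transform_lower) (simp add: lin_poly_degree)
qed

lemma lin_transform_rec:
  assumes "1 \<le> L"
  shows "lin_transform t L = Qpoly t * lin_transform t (L - 1)
    - (if t + 1 \<le> L then monom 1 ((t + 1) * t) * lin_transform t (L - t - 1) else 0)"
  unfolding lin_transform_def[of t L] lin_poly_rec[OF assms] transform_diff
  using transform_lin_terms assms by (simp add: transform_zero)

lemma cyc_transform_via_lin:
  assumes "1 \<le> m"
  shows "cyc_transform t m = Qpoly t * lin_transform t (m - 1)
    - (if t + 1 \<le> m then of_nat (t + 1) * (monom 1 ((t + 1) * t) * lin_transform t (m - t - 1)) else 0)"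
  unfolding cyc_transform_def Tpoly_via_lin_poly[OF assms] using transform_lin_terms[where L = m and t = t] assms
  by (cases "t + 1 \<le> m") (simp_all only: if_True if_False transform_diff transform_of_nat_mult transform_zero)

(* Eliminating the path polynomials: V_m = Q V_(m-1) - X^(t(t+1)) V_(m-t-1), with the correction
   -t X^(t(t+1)) at m = t+1, where the cycle first has room for a t-path. *)
lemma cyc_transform_rec:
  assumes "1 \<le> m"
  shows "cyc_transform t m = Qpoly t * cyc_transform t (m - 1)
    - (if t + 1 \<le> m then monom 1 ((t + 1) * t) * cyc_transform t (m - t - 1) else 0)
    - (if m = t + 1 then of_nat t * monom 1 ((t + 1) * t) else 0)"
proof -
  consider "m \<le> t" | "m = t + 1" | "t + 2 \<le> m" by linarith
  then show ?thesis
  proof cases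
    case 1
    then show ?thesis using assms by (simp add: cyc_transform_short power_eq_if)
  next
    case 2
    then have "cyc_transform t m = Qpoly t * Qpoly t ^ t - of_nat (t + 1) * monom 1 ((t + 1) * t)"
      using cyc_transform_via_lin[OF assms] by (simp add: lin_transform_short)
    moreover have "cyc_transform t (m - 1) = Qpoly t ^ t" "cyc_transform t (m - t - 1) = 1"
      using 2 by (simp_all add: cyc_transform_short)
    ultimately show ?thesis using 2 by (simp add: algebra_simps)
  next
    case 3
    let ?Z = "monom (1::int) ((t + 1) * t)" and ?V = "cyc_transform t" and ?P = "lin_transform t"
    define R where "R = (if t + 1 \<le> m - t - 1 then ?Z * ?P (m - 2 * t - 2) else 0)"
    have Vm: "?V m = Qpoly t * ?P (m - 1) - of_nat (t + 1) * (?Z * ?P (m - t - 1))"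
      using cyc_transform_via_lin[OF assms] 3 by simp
    have Vm1: "?V (m - 1) = Qpoly t * ?P (m - 2) - of_nat (t + 1) * (?Z * ?P (m - t - 2))"
      using cyc_transform_via_lin[of "m - 1" t] 3 by (simp add: numeral_2_eq_2)
    have Vmt1: "?V (m - t - 1) = Qpoly t * ?P (m - t - 2) - of_nat (t + 1) * R"
      using cyc_transform_via_lin[of "m - t - 1" t] 3 unfolding R_def by (simp add: numeral_2_eq_2)
    have Pm1: "?P (m - 1) = Qpoly t * ?P (m - 2) - ?Z * ?P (m - t - 2)"
      using lin_transform_rec[of "m - 1" t] 3 by (simp add: numeral_2_eq_2)
    have Pmt1: "?P (m - t - 1) = Qpoly t * ?P (m - t - 2) - R"
      using lin_transform_rec[of "m - t - 1" t] 3 unfolding R_def by (simp add: numeral_2_eq_2)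
    show ?thesis using 3 unfolding Vm Vm1 Vmt1 Pm1 Pmt1 by (simp add: algebra_simps)
  qed
qed

definition excess :: "nat \<Rightarrow> nat \<Rightarrow> int poly" where
  "excess t m = cyc_transform t m - monom 1 ((t + 1) * m)"

lemma excess_0: "excess t 0 = 0"
  unfolding excess_def by (simp add: cyc_transform_short)

lemma excess_step:
  assumes "1 \<le> m"
  shows "excess t m = (1 + monom 1 (t + 1)) * excess t (m - 1) - monom 1 ((t + 1) * t) * excess t (m - 1 - t)
    + (if m \<le> t then monom 1 ((t + 1) * (m - 1)) else 0)
    - (if m = t + 1 then of_nat t * monom 1 ((t + 1) * t) else 0)"
proof -
  have V: "cyc_transform t k = excess t k + monom 1 ((t + 1) * k)" for k
    unfolding excess_def by simp
  have "(t + 1) + (t + 1) * (m - 1) = (t + 1) * m" using assms by (cases m) auto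
  then have up: "monom (1::int) (t + 1) * monom 1 ((t + 1) * (m - 1)) = monom 1 ((t + 1) * m)"
    by (simp only: mult_monom mult_1)
  show ?thesis
  proof (cases "t + 1 \<le> m")
    case True
    have "t + (m - t - 1) = m - 1" using True by simp
    then have "(t + 1) * t + (t + 1) * (m - t - 1) = (t + 1) * (m - 1)"
      by (metis add_mult_distrib2)
    then have "monom (1::int) ((t + 1) * t) * monom 1 ((t + 1) * (m - t - 1)) = monom 1 ((t + 1) * (m - 1))"
      by (simp only: mult_monom mult_1)
    then show ?thesis
      using cyc_transform_rec[OF assms, of t] True up unfolding V by (simp add: algebra_simps)
  next
    case False
    then have "m - 1 - t = 0" by simp
    then show ?thesis
      using cyc_transform_rec[OF assms, of t] False up unfolding V by (simp add: algebra_simps excess_0)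
  qed
qed

definition window_sum :: "nat \<Rightarrow> nat \<Rightarrow> int poly" where
  "window_sum t m = (\<Sum>i<t. monom 1 ((t + 1) * i) * excess t (m - 1 - i))"

definition boundary_term :: "nat \<Rightarrow> nat \<Rightarrow> int poly" where
  "boundary_term t m = (if m \<le> t then monom (int m) ((t + 1) * (m - 1)) else 0)"

lemma window_sum_shift:
  "window_sum t (Suc m) + monom 1 ((t + 1) * t) * excess t (m - t) = excess t m + monom 1 (t + 1) * window_sum t m"
proof -
  let ?g = "\<lambda>i. monom (1::int) ((t + 1) * i) * excess t (m - i)"
  have "window_sum t (Suc m) + ?g t = sum ?g {..<Suc t}" unfolding window_sum_def by simp
  also have "\<dots> = ?g 0 + (\<Sum>i<t. ?g (Suc i))" by (rule sum.lessThan_Suc_shift)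
  also have "(\<Sum>i<t. ?g (Suc i)) = monom 1 (t + 1) * window_sum t m"
    unfolding window_sum_def sum_distrib_left
    by (intro sum.cong refl) (simp add: mult_monom mult.assoc)
  finally show ?thesis by simp
qed

lemma boundary_term_step:
  assumes "1 \<le> m"
  shows "monom 1 (t + 1) * boundary_term t (m - 1) + (if m \<le> t then monom 1 ((t + 1) * (m - 1)) else 0)
    - (if m = t + 1 then of_nat t * monom 1 ((t + 1) * t) else 0) = boundary_term t m"
proof -
  consider "m = 1" | "2 \<le> m" "m \<le> t" | "m = t + 1" "2 \<le> m" | "t + 2 \<le> m" using assms by linarith
  then show ?thesis
  proof cases
    case 2
    then have "m - 1 = Suc (m - 2)" by simp
    then have "(t + 1) + (t + 1) * (m - 2) = (t + 1) * (m - 1)" by (metis mult_Suc_right)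
    then have "monom (1::int) (t + 1) * monom (int (m - 1)) ((t + 1) * (m - 1 - 1))
        = monom (int (m - 1)) ((t + 1) * (m - 1))" by (simp add: mult_monom numeral_2_eq_2)
    moreover have "int (m - 1) + 1 = int m" using 2 by simp
    then have "monom (int (m - 1)) ((t + 1) * (m - 1)) + monom 1 ((t + 1) * (m - 1))
        = monom (int m) ((t + 1) * (m - 1))" by (simp only: add_monom)
    moreover have "m - 1 \<le> t" using 2 by simp
    ultimately show ?thesis using 2 unfolding boundary_term_def by simp
  next
    case 3
    then have "(t + 1) + (t + 1) * (t - 1) = (t + 1) * t" by (cases t) auto
    then show ?thesis using 3 unfolding boundary_term_def by (simp add: mult_monom of_nat_monom)
  qed (auto simp: boundary_term_def)
qed

lemma excess_window: "excess t m = window_sum t m + boundary_term t m"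
proof (induction m)
  case 0
  show ?case unfolding window_sum_def boundary_term_def by (simp add: excess_0)
next
  case (Suc m)
  define C where "C = (if Suc m \<le> t then monom 1 ((t + 1) * m) else 0)
      - (if Suc m = t + 1 then of_nat t * monom (1::int) ((t + 1) * t) else 0)"
  have "excess t (Suc m) = excess t m + monom 1 (t + 1) * excess t m
      - monom 1 ((t + 1) * t) * excess t (m - t) + C"
    using excess_step[of "Suc m" t] unfolding C_def by (simp add: algebra_simps)
  also have "\<dots> = (excess t m + monom 1 (t + 1) * window_sum t m - monom 1 ((t + 1) * t) * excess t (m - t))
      + (monom 1 (t + 1) * boundary_term t m + C)"
    unfolding Suc.IH by (simp add: algebra_simps)
  also have "\<dots> = window_sum t (Suc m) + boundary_term t (Suc m)"
  proof -
    have "excess t m + monom 1 (t + 1) * window_sum t m - monom 1 ((t + 1) * t) * excess t (m - t)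
        = window_sum t (Suc m)" using window_sum_shift[of t m] by (simp add: algebra_simps)
    moreover have "monom 1 (t + 1) * boundary_term t m + C = boundary_term t (Suc m)"
      using boundary_term_step[of "Suc m" t] unfolding C_def by (simp only: diff_Suc_1 add_diff_eq)
    ultimately show ?thesis by simp
  qed
  finally show ?case .
qed

lemma excess_coeff:
  "coeff (excess t m) d = (\<Sum>i<t. if (t + 1) * i \<le> d then coeff (excess t (m - 1 - i)) (d - (t + 1) * i) else 0)
    + (if m \<le> t \<and> d = (t + 1) * (m - 1) then int m else 0)"
  unfolding excess_window[of t m] window_sum_def boundary_term_def coeff_add coeff_sum
proof (intro arg_cong2[where f = "(+)"] sum.cong refl)
  fix i
  show "coeff (monom 1 ((t + 1) * i) * excess t (m - 1 - i)) d
      = (if (t + 1) * i \<le> d then coeff (excess t (m - 1 - i)) (d - (t + 1) * i) else 0)"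
    by (simp add: coeff_monom_mult not_less)
qed auto

lemma succ_times_below_square:
  fixes i t :: nat
  assumes "i < t"
  shows "(t + 1) * i + 1 \<le> t * t"
proof -
  from assms have "i + 1 \<le> t" by simp
  then have "(t + 1) * (i + 1) \<le> (t + 1) * t" by (rule mult_le_mono2)
  then show ?thesis by (simp add: algebra_simps)
qed

lemma window_support_arith:
  fixes t e j i :: nat
  assumes "t * e + j \<le> t * t * j"
  shows "t * (e + (t + 1) * i) + (j + 1 + i) + t * t \<le> t * t * (j + 1 + i) + (t + 1) * i + 1"
  using assms by (simp add: algebra_simps)

lemma excess_support: "coeff (excess t m) d \<noteq> 0 \<Longrightarrow> t * d + m \<le> t * t * m"
proof (induction m arbitrary: d rule: less_induct)
  case (less m d)
  let ?T = "\<lambda>i. if (t + 1) * i \<le> d then coeff (excess t (m - 1 - i)) (d - (t + 1) * i) else 0"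
  have "sum ?T {..<t} \<noteq> 0 \<or> (m \<le> t \<and> d = (t + 1) * (m - 1) \<and> m \<noteq> 0)"
    using less.prems unfolding excess_coeff[of t m d] by (auto split: if_splits)
  then show ?case
  proof
    assume "sum ?T {..<t} \<noteq> 0"
    then obtain i where "i < t" "?T i \<noteq> 0" using sum.not_neutral_contains_not_neutral by blast
    then have di: "(t + 1) * i \<le> d" and c: "coeff (excess t (m - 1 - i)) (d - (t + 1) * i) \<noteq> 0"
      by (auto split: if_splits)
    then have "m - 1 - i \<noteq> 0" by (auto simp: excess_0)
    then have j: "m - 1 - i < m" "(m - 1 - i) + 1 + i = m" by auto
    have e: "d - (t + 1) * i + (t + 1) * i = d" using di by simp
    have "t * (d - (t + 1) * i + (t + 1) * i) + (m - 1 - i + 1 + i) + t * t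
        \<le> t * t * (m - 1 - i + 1 + i) + (t + 1) * i + 1"
      by (rule window_support_arith[OF less.IH[OF j(1) c]])
    then show ?thesis using succ_times_below_square[OF \<open>i < t\<close>] unfolding e j(2) by linarith
  next
    assume b: "m \<le> t \<and> d = (t + 1) * (m - 1) \<and> m \<noteq> 0"
    then obtain k where k: "m = Suc k" "k < t" by (cases m) auto
    then have "(t + 1) * k + 1 \<le> t * t" by (intro succ_times_below_square)
    then show ?thesis using b k by (simp add: algebra_simps)
  qed
qed

lemma excess_coeff_zero:
  assumes "1 \<le> t"
  shows "1 \<le> n \<Longrightarrow> coeff (excess t n) 0 = 1"
proof (induction n)
  case (Suc n)
  have "(\<Sum>i<t. if (t + 1) * i \<le> 0 then coeff (excess t (n - i)) (0 - (t + 1) * i) else 0)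
      = (\<Sum>i<t. if i = 0 then coeff (excess t n) 0 else 0)"
    by (intro sum.cong) auto
  also have "\<dots> = coeff (excess t n) 0" using assms by simp
  finally have "coeff (excess t (Suc n)) 0 = coeff (excess t n) 0 + (if n = 0 then 1 else 0)"
    unfolding excess_coeff[of t "Suc n" 0] using assms by auto
  then show ?case using Suc by (cases "n = 0") (auto simp: excess_0)
qed simp

(* At the extreme exponent the window sum has a single surviving term, so the coefficient
   of W_(tk) at X^((t^2-1)k) equals t for every k >= 1. *)
lemma excess_coeff_top_step:
  assumes "1 \<le> t"
  shows "coeff (excess t (t * Suc k)) ((t * t - 1) * Suc k)
    = coeff (excess t (t * k)) ((t * t - 1) * k) + (if k = 0 then int t else 0)"
proof -
  obtain s where ts: "t = Suc s" using assms by (cases t) auto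
  define m d where "m = t * Suc k" and "d = (t * t - 1) * Suc k"
  let ?T = "\<lambda>i. if (t + 1) * i \<le> d then coeff (excess t (m - 1 - i)) (d - (t + 1) * i) else 0"
  have balanced: "t * d + m = t * t * m" unfolding m_def d_def ts by (simp add: algebra_simps)
  have "?T i = 0" if "i < s" for i
  proof (rule ccontr)
    assume "?T i \<noteq> 0"
    then have di: "(t + 1) * i \<le> d" and c: "coeff (excess t (m - 1 - i)) (d - (t + 1) * i) \<noteq> 0"
      by (auto split: if_splits)
    have e: "d - (t + 1) * i + (t + 1) * i = d" "m - 1 - i + 1 + i = m"
      using di that unfolding m_def d_def ts by auto
    have "t * (d - (t + 1) * i + (t + 1) * i) + (m - 1 - i + 1 + i) + t * t
        \<le> t * t * (m - 1 - i + 1 + i) + (t + 1) * i + 1"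
      by (rule window_support_arith[OF excess_support[OF c]])
    moreover have "(t + 1) * (i + 1) + 1 \<le> t * t" using succ_times_below_square[of "i + 1" t] that ts by simp
    ultimately show False using balanced unfolding e by (simp add: algebra_simps)
  qed
  then have "sum ?T {..<t} = ?T s"
    unfolding ts lessThan_Suc by (simp add: sum.neutral)
  also have "?T s = coeff (excess t (t * k)) ((t * t - 1) * k)"
    unfolding m_def d_def ts by (simp add: algebra_simps)
  finally have window: "sum ?T {..<t} = coeff (excess t (t * k)) ((t * t - 1) * k)" .
  have "(if m \<le> t \<and> d = (t + 1) * (m - 1) then int m else 0) = (if k = 0 then int t else 0)"
    unfolding m_def d_def ts by (auto simp: algebra_simps)
  then have "coeff (excess t m) d = coeff (excess t (t * k)) ((t * t - 1) * k) + (if k = 0 then int t else 0)"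
    using excess_coeff[of t m d] window by simp
  then show ?thesis unfolding m_def d_def .
qed

lemma excess_coeff_top:
  assumes "1 \<le> t" "1 \<le> k"
  shows "coeff (excess t (t * k)) ((t * t - 1) * k) = int t"
  using assms(2)
proof (induction k rule: nat_induct_at_least)
  case base
  then show ?case using excess_coeff_top_step[OF assms(1), of 0] by (simp add: excess_0)
next
  case (Suc k)
  then show ?case using excess_coeff_top_step[OF assms(1), of k] by simp
qed

lemma LT_product_expand:
  "LT t (Tpoly t m * Tpoly t n) = coeff (monom 1 ((t + 1) * (m + n))) (t * (m + n))
    + (if t * (m + n) < (t + 1) * m then 0 else coeff (excess t n) (t * (m + n) - (t + 1) * m))
    + (if t * (m + n) < (t + 1) * n then 0 else coeff (excess t m) (t * (m + n) - (t + 1) * n))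
    + coeff (excess t m * excess t n) (t * (m + n))"
proof -
  have "degree (Tpoly t m * Tpoly t n) \<le> m + n"
    using degree_mult_le[of "Tpoly t m" "Tpoly t n"] Tpoly_degree[of t m] Tpoly_degree[of t n] by linarith
  then have "LT t (Tpoly t m * Tpoly t n) = coeff (cyc_transform t m * cyc_transform t n) (t * (m + n))"
    unfolding cyc_transform_def transform_mult[OF Tpoly_degree Tpoly_degree, symmetric]
    by (rule LT_via_transform)
  also have "cyc_transform t m * cyc_transform t n
      = monom 1 ((t + 1) * m) * monom 1 ((t + 1) * n) + monom 1 ((t + 1) * m) * excess t n
        + excess t m * monom 1 ((t + 1) * n) + excess t m * excess t n"
    unfolding excess_def by (simp add: algebra_simps)
  finally show ?thesis
    by (simp add: coeff_monom_mult mult.commute[of "excess t m"] mult_monom add_mult_distrib2)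
qed

(* The product of two excesses never reaches X^(t(m+n)), by the support bound. *)
lemma excess_product_vanishes:
  assumes "0 < m + n"
  shows "coeff (excess t m * excess t n) (t * (m + n)) = 0"
  unfolding coeff_mult
proof (rule sum.neutral, rule ballI, rule ccontr)
  fix a assume a: "a \<in> {..t * (m + n)}"
    and "coeff (excess t m) a * coeff (excess t n) (t * (m + n) - a) \<noteq> 0"
  then have "t * a + m \<le> t * t * m" "t * (t * (m + n) - a) + n \<le> t * t * n"
    using excess_support by auto
  moreover have "t * a \<le> t * (t * (m + n))" using a by simp
  then have "t * (t * (m + n) - a) + t * a = t * t * (m + n)"
    by (simp add: diff_mult_distrib2 mult.assoc)
  ultimately show False using assms by (simp add: algebra_simps)
qed

lemma LT_orthogonal:
  assumes "1 \<le> t" "n * t < m"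
  shows "LT t (Tpoly t m * Tpoly t n) = 0"
proof -
  have "n \<le> t * m" using assms by (metis le_trans less_imp_le mult.commute mult_le_mono1 mult_1 le_square)
  then have shift: "t * (m + n) - (t + 1) * n = t * m - n" by (simp add: algebra_simps)
  have "coeff (excess t m) (t * m - n) = 0"
  proof (rule ccontr)
    assume "coeff (excess t m) (t * m - n) \<noteq> 0"
    then have "t * (t * m - n) + m \<le> t * t * m" by (rule excess_support)
    moreover have "t * (t * m - n) + t * n = t * t * m"
      using \<open>n \<le> t * m\<close> by (simp add: diff_mult_distrib2 mult.assoc)
    ultimately show False using assms(2) by (simp add: algebra_simps)
  qed
  moreover have "t * (m + n) < (t + 1) * m" "\<not> t * (m + n) < (t + 1) * n"
    using assms(2) \<open>n \<le> t * m\<close> by (simp_all add: algebra_simps)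
  ultimately show ?thesis
    unfolding LT_product_expand shift using assms(2) excess_product_vanishes[of m n t]
    by (simp add: algebra_simps)
qed

(* The diagonal value: the constant term of W_n and the extreme coefficient of W_(nt). *)
lemma LT_diagonal:
  assumes "1 \<le> t" "1 \<le> n"
  shows "LT t (Tpoly t (n * t) * Tpoly t n) = int t + 1"
proof -
  let ?m = "n * t"
  have "t * (?m + n) - (t + 1) * ?m = 0" "\<not> t * (?m + n) < (t + 1) * ?m"
    by (simp_all add: algebra_simps)
  moreover have "t * (?m + n) - (t + 1) * n = (t * t - 1) * n" "\<not> t * (?m + n) < (t + 1) * n"
    using assms(1) by (simp_all add: algebra_simps diff_mult_distrib)
  moreover have "coeff (excess t ?m) ((t * t - 1) * n) = int t"
    using excess_coeff_top[OF assms] by (simp add: mult.commute)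
  ultimately show ?thesis
    unfolding LT_product_expand
    using excess_coeff_zero[OF assms] excess_product_vanishes[of ?m n t] assms(2)
    by (simp add: algebra_simps)
qed

theorem mainTheorem8:
  fixes t :: nat
  assumes "t \<ge> 1"
  shows "(\<forall>n m. m > n * t \<longrightarrow> LT t (Tpoly t m * Tpoly t n) = 0) \<and>
         (\<forall>n. n \<ge> 1 \<longrightarrow> LT t (Tpoly t (n * t) * Tpoly t n) = int t + 1)"
  using LT_orthogonal[OF assms] LT_diagonal[OF assms] by blast

end
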